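(* Let $q$ be a prime power and $T\in\mathbb F_q[X,Y,Z]$ a reduced polynomial satisfying Property (a): $T(a,0,z)=T(0,b,z)=z$ for all $a,b,z\in\mathbb F_q$, and at least one of the following: (c) for all $a,b,c,d\in\mathbb F_q$ with $a\neq c$ there is a unique $x\in\mathbb F_q$ with $T(x,a,b)=T(x,c,d)$; (e) for all $a,b,c,d\in\mathbb F_q$ with $a\neq c$ there is a unique pair $(y,z)\in\mathbb F_q^2$ with $T(a,y,z)=b$ and $T(c,y,z)=d$. Then for every $z\in\mathbb F_q$ the polynomial $T(X,Y,z)-z\in\mathbb F_q[X,Y]$ is a $\kappa$-polynomial over $\mathbb F_q$.
   Context: A polynomial is reduced if its degree in each variable is less than $q$. A polynomial $f\in\mathbb F_q[X_1,\dots,X_n]$ is a $\kappa$-polynomial over $\mathbb F_q$ if the number $k_a=\#\{\mathbf x\in\mathbb F_q^n: f(\mathbf x)=a\}$ is the same for all $a\in\mathbb F_q^*=\mathbb F_q\setminus\{0\}$. *)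

theory Defs
  imports "HOL-Library.Cardinality"
begin

text \<open>A polynomial in F_q[X,Y,Z] is represented by its coefficient array
  c i j k (coefficient of X^i Y^j Z^k); it is reduced if all coefficients with
  some exponent \<ge> q vanish. Here q = CARD('a) for a finite field type 'a.\<close>

definition reduced3 :: "(nat \<Rightarrow> nat \<Rightarrow> nat \<Rightarrow> 'a::{finite,field}) \<Rightarrow> bool" where
  "reduced3 c \<longleftrightarrow> (\<forall>i j k. (CARD('a) \<le> i \<or> CARD('a) \<le> j \<or> CARD('a) \<le> k) \<longrightarrow> c i j k = 0)"

definition eval3 :: "(nat \<Rightarrow> nat \<Rightarrow> nat \<Rightarrow> 'a::{finite,field}) \<Rightarrow> 'a \<Rightarrow> 'a \<Rightarrow> 'a \<Rightarrow> 'a" where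
  "eval3 c x y z = (\<Sum>i<CARD('a). \<Sum>j<CARD('a). \<Sum>k<CARD('a). c i j k * x ^ i * y ^ j * z ^ k)"

definition kappa2 :: "('a::{finite,field} \<Rightarrow> 'a \<Rightarrow> 'a) \<Rightarrow> bool" where
  "kappa2 f \<longleftrightarrow> (\<forall>a b. a \<noteq> 0 \<longrightarrow> b \<noteq> 0 \<longrightarrow>
      card {p. f (fst p) (snd p) = a} = card {p. f (fst p) (snd p) = b})"

end

theory Submission
  imports Defs
begin

text \<open>Fix \<open>z\<close> and put \<open>f x y = T(x,y,z)\<close>. Property (a) gives \<open>f x 0 = f 0 y = z\<close>.
  Specialising (c) to \<open>c = 0\<close> shows that for every \<open>y \<noteq> 0\<close> the map \<open>x \<mapsto> f x y\<close> is
  bijective; specialising (e) to \<open>c = 0\<close> shows the same for \<open>y \<mapsto> f x y\<close> with \<open>x \<noteq> 0\<close>.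
  In the first case, for \<open>a \<noteq> 0\<close> the fibre \<open>f = z + a\<close> meets every line \<open>y = const \<noteq> 0\<close>
  exactly once and misses the line \<open>y = 0\<close>, so it has \<open>q - 1\<close> points; the second case is
  symmetric.\<close>

lemma card_fiber_eq_card_columns:
  fixes f :: "'a \<Rightarrow> 'b \<Rightarrow> 'c"
  assumes unique: "\<And>y. y \<in> B \<Longrightarrow> \<exists>!x. f x y = w"
    and outside: "\<And>x y. y \<notin> B \<Longrightarrow> f x y \<noteq> w"
  shows "card {p. f (fst p) (snd p) = w} = card B"
proof (rule bij_betw_same_card)
  show "bij_betw snd {p. f (fst p) (snd p) = w} B"
  proof (rule bij_betw_imageI)
    show "inj_on snd {p. f (fst p) (snd p) = w}"
    proof (rule inj_onI)
      fix p q
      assume p: "p \<in> {p. f (fst p) (snd p) = w}" and q: "q \<in> {p. f (fst p) (snd p) = w}"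
        and "snd p = snd q"
      with outside have "snd p \<in> B" by auto
      with unique p q \<open>snd p = snd q\<close> have "fst p = fst q" by auto
      with \<open>snd p = snd q\<close> show "p = q" by (simp add: prod_eq_iff)
    qed
    show "snd ` {p. f (fst p) (snd p) = w} = B"
    proof
      show "snd ` {p. f (fst p) (snd p) = w} \<subseteq> B"
        using outside by auto
      show "B \<subseteq> snd ` {p. f (fst p) (snd p) = w}"
      proof
        fix y assume "y \<in> B"
        then obtain x where "f x y = w" using unique by blast
        then show "y \<in> snd ` {p. f (fst p) (snd p) = w}"
          by (auto intro!: image_eqI[where x = "(x, y)"])
      qed
    qed
  qed
qed

lemma kappa2_swap:
  fixes f :: "'a::{finite,field} \<Rightarrow> 'a \<Rightarrow> 'a"
  shows "kappa2 (\<lambda>x y. f y x) \<longleftrightarrow> kappa2 f"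
proof -
  have "card {p. f (snd p) (fst p) = a} = card {p. f (fst p) (snd p) = a}" for a
  proof (rule bij_betw_same_card)
    show "bij_betw prod.swap {p. f (snd p) (fst p) = a} {p. f (fst p) (snd p) = a}"
      by (rule bij_betw_imageI) (auto intro!: image_eqI[where x = "prod.swap _"])
  qed
  then show ?thesis
    unfolding kappa2_def by simp
qed

lemma kappa2_if_columns_bijective:
  fixes f :: "'a::{finite,field} \<Rightarrow> 'a \<Rightarrow> 'a"
  assumes axis: "\<And>x. f x 0 = z"
    and bij: "\<And>y w. y \<noteq> 0 \<Longrightarrow> \<exists>!x. f x y = w"
  shows "kappa2 (\<lambda>x y. f x y - z)"
proof -
  have "card {p. f (fst p) (snd p) - z = a} = card {y::'a. y \<noteq> 0}" if "a \<noteq> 0" for a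
  proof -
    have "{p. f (fst p) (snd p) - z = a} = {p. f (fst p) (snd p) = z + a}"
      by (auto simp: algebra_simps)
    also have "card \<dots> = card {y::'a. y \<noteq> 0}"
      by (rule card_fiber_eq_card_columns) (use axis bij \<open>a \<noteq> 0\<close> in auto)
    finally show ?thesis .
  qed
  then show ?thesis
    unfolding kappa2_def by simp
qed

lemma kappa2_if_rows_bijective:
  fixes f :: "'a::{finite,field} \<Rightarrow> 'a \<Rightarrow> 'a"
  assumes axis: "\<And>y. f 0 y = z"
    and bij: "\<And>x w. x \<noteq> 0 \<Longrightarrow> \<exists>!y. f x y = w"
  shows "kappa2 (\<lambda>x y. f x y - z)"
  using kappa2_if_columns_bijective[of "\<lambda>y x. f x y" z] assms
  by (simp add: kappa2_swap[of "\<lambda>x y. f x y - z"])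

theorem theorem4p4:
  fixes c :: "nat \<Rightarrow> nat \<Rightarrow> nat \<Rightarrow> 'a::{finite,field}"
  assumes red: "reduced3 c"
    and propa: "\<forall>a b z. eval3 c a 0 z = z \<and> eval3 c 0 b z = z"
    and ce: "(\<forall>a b c' d. a \<noteq> c' \<longrightarrow> (\<exists>!x. eval3 c x a b = eval3 c x c' d))
           \<or> (\<forall>a b c' d. a \<noteq> c' \<longrightarrow>
                (\<exists>!p. eval3 c a (fst p) (snd p) = b \<and> eval3 c c' (fst p) (snd p) = d))"
  shows "\<forall>z. kappa2 (\<lambda>x y. eval3 c x y z - z)"
proof
  fix z
  from ce show "kappa2 (\<lambda>x y. eval3 c x y z - z)"
  proof
    assume c: "\<forall>a b c' d. a \<noteq> c' \<longrightarrow> (\<exists>!x. eval3 c x a b = eval3 c x c' d)"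
    have "\<exists>!x. eval3 c x y z = w" if "y \<noteq> 0" for y w
      using c[rule_format, OF that, of z w] propa by simp
    then show ?thesis
      using propa by (intro kappa2_if_columns_bijective) auto
  next
    assume e: "\<forall>a b c' d. a \<noteq> c' \<longrightarrow>
                (\<exists>!p. eval3 c a (fst p) (snd p) = b \<and> eval3 c c' (fst p) (snd p) = d)"
    have "\<exists>!y. eval3 c x y z = w" if "x \<noteq> 0" for x w
    proof -
      have "(eval3 c x (fst p) (snd p) = w \<and> eval3 c 0 (fst p) (snd p) = z)
            \<longleftrightarrow> (eval3 c x (fst p) z = w \<and> snd p = z)" for p
        using propa by auto
      then have "\<exists>!p. eval3 c x (fst p) z = w \<and> snd p = z"
        using e[rule_format, OF that, of w z] by simp
      then show ?thesis
        by (metis fst_conv snd_conv prod.collapse)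
    qed
    then show ?thesis
      using propa by (intro kappa2_if_rows_bijective) auto
  qed
qed

end
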